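(* We have $\mathsf{E}^{-1}=\mathsf{E}$, $\mathsf{E}\mathsf{A}\mathsf{E}=\mathsf{B}$, $\mathsf{E}\mathsf{B}\mathsf{E}=\mathsf{A}$, $\mathsf{E}\mathsf{C}\mathsf{E}=\mathsf{C}$. For every $d\in\mathbb{N}$ and $m_1,\dots,m_{2d}\in\mathbb{Z}$, with $t=\operatorname{tr}(W)$, $s=\operatorname{tr}^*(W)$, $W=W_1(m_1,\dots,m_{2d})$, the characteristic polynomial of $\mathsf{C}\mathsf{W}(m_1,\dots,m_{2d})\mathsf{E}$ is $$\det(xI_5-\mathsf{C}\mathsf{W}\mathsf{E})=(x-1)\big(1-4sx-(s^2+4ts+2)x^2-4sx^3+x^4\big),$$ and hence its eigenvalues are $1$ and $$s+\tfrac12\sqrt{5s^2+4ts+4}\pm\tfrac12\sqrt{9s^2+4ts+4s\sqrt{5s^2+4ts+4}},\qquad s-\tfrac12\sqrt{5s^2+4ts+4}\pm\tfrac12\sqrt{9s^2+4ts-4s\sqrt{5s^2+4ts+4}}.$$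
   Context: $A_1=\begin{pmatrix}1&1\\0&1\end{pmatrix}$, $B_1=\begin{pmatrix}1&0\\1&1\end{pmatrix}$, $W_1(m_1,\dots,m_{2d})=\prod_{i=1}^dA_1^{m_{2i-1}}B_1^{m_{2i}}$. Let $\mathsf{A}=\begin{pmatrix}1&1&0&0&2\\0&1&0&0&0\\0&0&1&1&0\\0&0&0&1&0\\0&0&0&0&1\end{pmatrix}$, $\mathsf{B}=\begin{pmatrix}1&0&0&0&0\\1&1&0&0&0\\0&0&1&0&0\\0&0&1&1&2\\0&0&0&0&1\end{pmatrix}$, $\mathsf{C}=\begin{pmatrix}1&0&0&0&0\\0&1&0&0&0\\0&0&1&0&0\\0&0&0&1&0\\2&0&0&2&1\end{pmatrix}$, $\mathsf{E}=\begin{pmatrix}0&0&0&1&0\\0&0&1&0&0\\0&1&0&0&0\\1&0&0&0&0\\0&0&0&0&1\end{pmatrix}$, and $\mathsf{W}(m_1,\dots,m_{2d})=\prod_{i=1}^d\mathsf{A}^{m_{2i-1}}\mathsf{B}^{m_{2i}}$. $\operatorname{tr}^*(M)=M_{1,2}+M_{2,1}$ is the anti-trace of a $2\times2$ matrix. *)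

theory Defs
  imports "Jordan_Normal_Form.Char_Poly" "HOL-Complex_Analysis.Complex_Analysis"
begin

definition mat_inv :: "'a :: comm_ring_1 mat \<Rightarrow> 'a mat" where
  "mat_inv X = (SOME Y. Y \<in> carrier_mat (dim_row X) (dim_row X) \<and> inverts_mat X Y \<and> inverts_mat Y X)"

definition zpow_mat :: "'a :: comm_ring_1 mat \<Rightarrow> int \<Rightarrow> 'a mat" where
  "zpow_mat X k = (if 0 \<le> k then X ^\<^sub>m nat k else (mat_inv X) ^\<^sub>m nat (- k))"

text \<open>The word  prod_{i=1}^d X^(m_(2i-1)) Y^(m_(2i))  in n x n matrices (ordered left to right).\<close>
fun word_mat :: "nat \<Rightarrow> 'a :: comm_ring_1 mat \<Rightarrow> 'a mat \<Rightarrow> (nat \<Rightarrow> int) \<Rightarrow> nat \<Rightarrow> 'a mat" where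
  "word_mat n X Y m 0 = 1\<^sub>m n"
| "word_mat n X Y m (Suc d) =
     word_mat n X Y m d * (zpow_mat X (m (2 * d + 1)) * zpow_mat Y (m (2 * d + 2)))"

definition A1 :: "int mat" where "A1 = mat_of_rows_list 2 [[1,1],[0,1]]"
definition B1 :: "int mat" where "B1 = mat_of_rows_list 2 [[1,0],[1,1]]"

definition W1 :: "(nat \<Rightarrow> int) \<Rightarrow> nat \<Rightarrow> int mat" where
  "W1 m d = word_mat 2 A1 B1 m d"

definition sA :: "int mat" where "sA = mat_of_rows_list 5
  [[1,1,0,0,2],[0,1,0,0,0],[0,0,1,1,0],[0,0,0,1,0],[0,0,0,0,1]]"
definition sB :: "int mat" where "sB = mat_of_rows_list 5
  [[1,0,0,0,0],[1,1,0,0,0],[0,0,1,0,0],[0,0,1,1,2],[0,0,0,0,1]]"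
definition sC :: "int mat" where "sC = mat_of_rows_list 5
  [[1,0,0,0,0],[0,1,0,0,0],[0,0,1,0,0],[0,0,0,1,0],[2,0,0,2,1]]"
definition sE :: "int mat" where "sE = mat_of_rows_list 5
  [[0,0,0,1,0],[0,0,1,0,0],[0,1,0,0,0],[1,0,0,0,0],[0,0,0,0,1]]"

definition sW :: "(nat \<Rightarrow> int) \<Rightarrow> nat \<Rightarrow> int mat" where
  "sW m d = word_mat 5 sA sB m d"

definition tr2 :: "'a :: comm_ring_1 mat \<Rightarrow> 'a" where
  "tr2 M = M $$ (0,0) + M $$ (1,1)"

definition antitr2 :: "'a :: comm_ring_1 mat \<Rightarrow> 'a" where
  "antitr2 M = M $$ (0,1) + M $$ (1,0)"

end

(*
  The map aff_rep, which sends a 2x2 matrix W to an affine map of Z^4 conjugate to W \<oplus> W, is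
  multiplicative and sends A1, B1 to sA, sB. Hence sW = aff_rep W1, and sC * sW * sE is an explicit
  matrix in the entries a, b, c, d of W1, which lies in SL2(Z). Laplace expansion gives its
  characteristic polynomial as the stated one plus a multiple of ad - bc - 1 = 0, and the
  palindromic quartic factor splits into two quadratics whose roots are the stated eigenvalues.
*)

theory Submission
  imports Defs
begin

lemma mat_times_mat:
  "Matrix.mat n k f * Matrix.mat k m g = Matrix.mat n m (\<lambda>(i,j). \<Sum>l<k. f (i,l) * g (l,j))"
  by (rule eq_matI) (auto simp: scalar_prod_def atLeast0LessThan intro!: sum.cong)

lemma mat_square_eqI:
  "(\<And>i j. i < n \<Longrightarrow> j < n \<Longrightarrow> f (i,j) = g (i,j)) \<Longrightarrow> Matrix.mat n n f = Matrix.mat n n g"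
  by (rule eq_matI) auto

lemma mat_eq_entries: "X \<in> carrier_mat n m \<Longrightarrow> X = Matrix.mat n m (\<lambda>(i,j). X $$ (i,j))"
  by (rule eq_matI) auto

lemma less_2_iff: "(i::nat) < 2 \<longleftrightarrow> i = 0 \<or> i = Suc 0"
  by auto

lemma less_5_iff:
  "(i::nat) < 5 \<longleftrightarrow> i = 0 \<or> i = Suc 0 \<or> i = Suc (Suc 0) \<or> i = Suc (Suc (Suc 0)) \<or> i = Suc (Suc (Suc (Suc 0)))"
  by auto

lemma sum_lessThan_2: "(\<Sum>l<2::nat. f l) = f 0 + f (Suc 0)"
  by (simp add: eval_nat_numeral)

lemma sum_lessThan_5:
  "(\<Sum>l<5::nat. f l) = f 0 + f (Suc 0) + f (Suc (Suc 0)) + f (Suc (Suc (Suc 0))) + f (Suc (Suc (Suc (Suc 0))))"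
  by (simp add: eval_nat_numeral ac_simps)

lemma mat_of_rows_list_2: "mat_of_rows_list 2 [r0, r1] = Matrix.mat 2 2 (\<lambda>(i,j). [r0, r1] ! i ! j)"
  unfolding mat_of_rows_list_def by (simp add: eval_nat_numeral)

lemma mat_of_rows_list_5:
  "mat_of_rows_list 5 [r0, r1, r2, r3, r4] = Matrix.mat 5 5 (\<lambda>(i,j). [r0, r1, r2, r3, r4] ! i ! j)"
  unfolding mat_of_rows_list_def by (simp add: eval_nat_numeral)

lemma one_mat_2: "1\<^sub>m 2 = Matrix.mat 2 2 (\<lambda>(i,j). [[1,0],[0,1]] ! i ! j)"
  by (rule eq_matI) (auto simp: less_2_iff)

lemma one_mat_5: "1\<^sub>m 5 = Matrix.mat 5 5 (\<lambda>(i,j).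
    [[1,0,0,0,0],[0,1,0,0,0],[0,0,1,0,0],[0,0,0,1,0],[0,0,0,0,1]] ! i ! j)"
  by (rule eq_matI; simp only: less_5_iff index_one_mat index_mat dim_row_mat dim_col_mat; (elim disjE)?; simp)

lemmas mat_2_simps = mat_of_rows_list_2 one_mat_2 mat_times_mat sum_lessThan_2
lemmas mat_5_simps = mat_of_rows_list_5 one_mat_5 mat_times_mat sum_lessThan_5

lemma det_mat_0: "Determinant.det (Matrix.mat 0 0 f) = 1"
proof -
  have "Matrix.mat 0 0 f = 1\<^sub>m 0" by (rule eq_matI) auto
  then show ?thesis by simp
qed

lemma det_mat_Suc:
  "Determinant.det (Matrix.mat (Suc n) (Suc n) f) =
    (\<Sum>j<Suc n. f (0,j) * ((-1)^j *
       Determinant.det (Matrix.mat n n (\<lambda>(i,k). f (Suc i, if k < j then k else Suc k)))))"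
proof -
  let ?M = "Matrix.mat (Suc n) (Suc n) f"
  have minor: "mat_delete ?M 0 j = Matrix.mat n n (\<lambda>(i,k). f (Suc i, if k < j then k else Suc k))" for j
    unfolding mat_delete_def by (rule eq_matI) auto
  have "Determinant.det ?M = (\<Sum>j<Suc n. ?M $$ (0,j) * cofactor ?M 0 j)"
    by (rule laplace_expansion_row) auto
  then show ?thesis
    by (simp add: cofactor_def minor)
qed

lemma det_2x2:
  assumes "X \<in> carrier_mat 2 2"
  shows "Determinant.det X = X $$ (0,0) * X $$ (1,1) - X $$ (0,1) * X $$ (1,0)"
  by (subst mat_eq_entries[OF assms])
    (simp add: numeral_2_eq_2 det_mat_Suc det_mat_0 sum_lessThan_2)

lemma mat_inv_eqI:
  assumes X: "X \<in> carrier_mat n n" and Y: "Y \<in> carrier_mat n n"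
    and XY: "X * Y = 1\<^sub>m n" and YX: "Y * X = 1\<^sub>m n"
  shows "mat_inv X = Y"
proof -
  let ?P = "\<lambda>Z. Z \<in> carrier_mat (dim_row X) (dim_row X) \<and> inverts_mat X Z \<and> inverts_mat Z X"
  have "?P Y"
    using X Y XY YX unfolding inverts_mat_def by auto
  then have "?P (mat_inv X)"
    unfolding mat_inv_def by (rule someI)
  then have Z: "mat_inv X \<in> carrier_mat n n" and ZX: "mat_inv X * X = 1\<^sub>m n"
    using X unfolding inverts_mat_def by auto
  have "mat_inv X = mat_inv X * (X * Y)"
    using Z by (simp add: XY)
  also have "\<dots> = Y"
    using X Y Z by (simp add: assoc_mult_mat[symmetric] ZX)
  finally show ?thesis .
qed

definition sl2 :: "'a :: comm_ring_1 mat set" where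
  "sl2 = {X \<in> carrier_mat 2 2. Determinant.det X = 1}"

definition adj2 :: "'a :: comm_ring_1 mat \<Rightarrow> 'a mat" where
  "adj2 X = mat_of_rows_list 2 [[X $$ (1,1), - X $$ (0,1)], [- X $$ (1,0), X $$ (0,0)]]"

lemma adj2_carrier: "adj2 X \<in> carrier_mat 2 2"
  by (simp add: adj2_def mat_of_rows_list_2)

lemma sl2_carrier: "X \<in> sl2 \<Longrightarrow> X \<in> carrier_mat 2 2"
  by (simp add: sl2_def)

lemma sl2_entries_det: "X \<in> sl2 \<Longrightarrow> X $$ (0,0) * X $$ (1,1) - X $$ (0,1) * X $$ (1,0) = 1"
  unfolding sl2_def using det_2x2[of X] by simp

lemma sl2_mult: "X \<in> sl2 \<Longrightarrow> Y \<in> sl2 \<Longrightarrow> X * Y \<in> sl2"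
  by (auto simp: sl2_def det_mult)

lemma sl2_one: "1\<^sub>m 2 \<in> sl2"
  by (simp add: sl2_def)

lemma sl2_pow: "X \<in> sl2 \<Longrightarrow> X ^\<^sub>m n \<in> sl2"
  by (induction n) (auto simp: sl2_def det_mult[of _ 2])

lemma sl2_adj2:
  assumes "X \<in> sl2"
  shows "X * adj2 X = 1\<^sub>m 2" and "adj2 X * X = 1\<^sub>m 2" and "adj2 X \<in> sl2"
proof -
  have X: "X \<in> carrier_mat 2 2"
    by (rule sl2_carrier[OF assms])
  have det: "X $$ (0,0) * X $$ (1,1) - X $$ (0,1) * X $$ (1,0) = 1"
    by (rule sl2_entries_det[OF assms])
  define a b c d where "a = X $$ (0,0)" and "b = X $$ (0,1)" and "c = X $$ (1,0)" and "d = X $$ (1,1)"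
  have Xe: "X = mat_of_rows_list 2 [[a, b], [c, d]]"
    unfolding a_def b_def c_def d_def mat_of_rows_list_2
    by (rule eq_matI) (use X in \<open>auto simp: less_2_iff\<close>)
  have adj: "adj2 X = mat_of_rows_list 2 [[d, -b], [-c, a]]"
    unfolding adj2_def a_def b_def c_def d_def ..
  have det': "a * d - b * c = 1"
    using det unfolding a_def b_def c_def d_def .
  show "X * adj2 X = 1\<^sub>m 2" "adj2 X * X = 1\<^sub>m 2"
    unfolding adj unfolding Xe mat_2_simps
    by (rule mat_square_eqI, simp only: less_2_iff, elim disjE, simp_all add: det' algebra_simps)+
  show "adj2 X \<in> sl2"
    using det' unfolding adj sl2_def by (simp add: det_2x2 mat_of_rows_list_2 algebra_simps)
qed

lemma sl2_mat_inv: "X \<in> sl2 \<Longrightarrow> mat_inv X = adj2 X"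
  by (rule mat_inv_eqI[of _ 2]) (auto simp: sl2_def adj2_carrier sl2_adj2)

lemma sl2_zpow_mat: "X \<in> sl2 \<Longrightarrow> zpow_mat X k \<in> sl2"
  by (simp add: zpow_mat_def sl2_pow sl2_mat_inv sl2_adj2)

lemma sl2_word_mat: "X \<in> sl2 \<Longrightarrow> Y \<in> sl2 \<Longrightarrow> word_mat 2 X Y m d \<in> sl2"
  by (induction d) (simp_all add: sl2_one sl2_mult sl2_zpow_mat)

text \<open>\<open>aff_rep W\<close> is the affine map \<open>x \<mapsto> (W \<oplus> W)(x + 2v) - 2v\<close> of
  \<open>\<int>\<^sup>4\<close> with \<open>v = (0,1,1,0)\<close>, written in homogeneous coordinates; being a conjugate of
  \<open>W \<oplus> W\<close>, it is multiplicative in \<open>W\<close>.\<close>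

definition aff_rep :: "'a :: comm_ring_1 mat \<Rightarrow> 'a mat" where
  "aff_rep W = mat_of_rows_list 5
    [[W $$ (0,0), W $$ (0,1), 0, 0, 2 * W $$ (0,1)],
     [W $$ (1,0), W $$ (1,1), 0, 0, 2 * (W $$ (1,1) - 1)],
     [0, 0, W $$ (0,0), W $$ (0,1), 2 * (W $$ (0,0) - 1)],
     [0, 0, W $$ (1,0), W $$ (1,1), 2 * W $$ (1,0)],
     [0, 0, 0, 0, 1]]"

lemma aff_rep_carrier: "aff_rep W \<in> carrier_mat 5 5"
  by (simp add: aff_rep_def mat_of_rows_list_5)

lemma aff_rep_mult:
  assumes X: "X \<in> carrier_mat 2 2" and Y: "Y \<in> carrier_mat 2 2"
  shows "aff_rep (X * Y) = aff_rep X * aff_rep Y"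
proof -
  have XY: "(X * Y) $$ (i,j) = X $$ (i,0) * Y $$ (0,j) + X $$ (i,1) * Y $$ (1,j)"
    if "i < 2" "j < 2" for i j
    using X Y that by (simp add: scalar_prod_def sum_lessThan_2 atLeast0LessThan)
  show ?thesis
    unfolding aff_rep_def mat_5_simps
    by (rule mat_square_eqI, simp only: less_5_iff, elim disjE,
        simp_all only: nth_Cons_0 nth_Cons_Suc case_prod_conv One_nat_def[symmetric],
        simp_all add: XY algebra_simps)
qed

lemma aff_rep_one: "aff_rep (1\<^sub>m 2) = 1\<^sub>m 5"
  unfolding aff_rep_def mat_of_rows_list_5 one_mat_5
  by (rule mat_square_eqI, simp only: less_5_iff, elim disjE,
      simp_all only: nth_Cons_0 nth_Cons_Suc case_prod_conv, simp_all)

lemma aff_rep_pow: "X \<in> carrier_mat 2 2 \<Longrightarrow> aff_rep (X ^\<^sub>m n) = aff_rep X ^\<^sub>m n"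
  by (induction n) (simp_all add: aff_rep_one aff_rep_mult aff_rep_carrier[THEN carrier_matD(1)])

lemma aff_rep_mat_inv:
  assumes "X \<in> sl2"
  shows "mat_inv (aff_rep X) = aff_rep (mat_inv X)"
proof (rule mat_inv_eqI[OF aff_rep_carrier aff_rep_carrier])
  have X: "X \<in> carrier_mat 2 2" and Z: "mat_inv X \<in> carrier_mat 2 2"
    using assms by (simp_all add: sl2_def sl2_mat_inv adj2_carrier)
  have "X * mat_inv X = 1\<^sub>m 2" "mat_inv X * X = 1\<^sub>m 2"
    using assms by (simp_all add: sl2_mat_inv sl2_adj2)
  then show "aff_rep X * aff_rep (mat_inv X) = 1\<^sub>m 5" "aff_rep (mat_inv X) * aff_rep X = 1\<^sub>m 5"
    by (simp_all add: aff_rep_mult[OF X Z, symmetric] aff_rep_mult[OF Z X, symmetric] aff_rep_one)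
qed

lemma aff_rep_zpow_mat: "X \<in> sl2 \<Longrightarrow> aff_rep (zpow_mat X k) = zpow_mat (aff_rep X) k"
  by (simp add: zpow_mat_def aff_rep_pow aff_rep_mat_inv sl2_def sl2_mat_inv adj2_carrier)

lemma aff_rep_word_mat:
  assumes "X \<in> sl2" and "Y \<in> sl2"
  shows "aff_rep (word_mat 2 X Y m d) = word_mat 5 (aff_rep X) (aff_rep Y) m d"
proof (induction d)
  case 0
  show ?case by (simp add: aff_rep_one)
next
  case (Suc d)
  have W: "word_mat 2 X Y m d \<in> carrier_mat 2 2"
    and X: "zpow_mat X k \<in> carrier_mat 2 2" and Y: "zpow_mat Y l \<in> carrier_mat 2 2" for k l
    using assms by (simp_all add: sl2_carrier sl2_word_mat sl2_zpow_mat)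
  show ?case
    using Suc by (simp add: aff_rep_mult[OF W mult_carrier_mat[OF X Y]] aff_rep_mult[OF X Y]
        aff_rep_zpow_mat assms)
qed

lemma A1_sl2: "A1 \<in> sl2" and B1_sl2: "B1 \<in> sl2"
  by (simp_all add: sl2_def det_2x2 A1_def B1_def mat_of_rows_list_2)

lemma aff_rep_A1: "aff_rep A1 = sA" and aff_rep_B1: "aff_rep B1 = sB"
  unfolding aff_rep_def A1_def B1_def sA_def sB_def mat_of_rows_list_2 mat_of_rows_list_5
  by (rule mat_square_eqI; simp only: less_5_iff; elim disjE;
      simp only: nth_Cons_0 nth_Cons_Suc case_prod_conv; simp)+

lemma W1_sl2: "W1 m d \<in> sl2"
  unfolding W1_def by (rule sl2_word_mat[OF A1_sl2 B1_sl2])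

lemma sW_eq_aff_rep_W1: "sW m d = aff_rep (W1 m d)"
  unfolding sW_def W1_def aff_rep_word_mat[OF A1_sl2 B1_sl2] aff_rep_A1 aff_rep_B1 ..

lemma sE_sE: "sE * sE = 1\<^sub>m 5"
  and sE_sA_sE: "sE * sA * sE = sB"
  and sE_sB_sE: "sE * sB * sE = sA"
  and sE_sC_sE: "sE * sC * sE = sC"
  unfolding sA_def sB_def sC_def sE_def mat_5_simps
  by (rule mat_square_eqI; simp only: less_5_iff; elim disjE;
      simp only: nth_Cons_0 nth_Cons_Suc case_prod_conv; simp)+

lemma poly_char_poly_eq_det:
  assumes "A \<in> carrier_mat n n"
  shows "poly (char_poly A) x = Determinant.det (x \<cdot>\<^sub>m 1\<^sub>m n - A)"
  unfolding char_poly_def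
  by (rule poly_det_cong[of _ n]) (use assms in \<open>auto simp: char_poly_matrix_def\<close>)

definition cwe :: "'a :: comm_ring_1 \<Rightarrow> 'a \<Rightarrow> 'a \<Rightarrow> 'a \<Rightarrow> 'a mat" where
  "cwe a b c d = mat_of_rows_list 5
    [[0, 0, b, a, 2 * b],
     [0, 0, d, c, 2 * d - 2],
     [b, a, 0, 0, 2 * a - 2],
     [d, c, 0, 0, 2 * c],
     [2 * d, 2 * c, 2 * b, 2 * a, 4 * b + 4 * c + 1]]"

lemma sC_aff_rep_sE: "sC * aff_rep W * sE = cwe (W $$ (0,0)) (W $$ (0,1)) (W $$ (1,0)) (W $$ (1,1))"
  unfolding cwe_def sC_def sE_def aff_rep_def mat_5_simps
  by (rule mat_square_eqI; simp only: less_5_iff; elim disjE;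
      simp only: nth_Cons_0 nth_Cons_Suc case_prod_conv; simp)

lemma sC_sW_sE_eq_cwe:
  "sC * sW m d * sE = cwe (W1 m d $$ (0,0)) (W1 m d $$ (0,1)) (W1 m d $$ (1,0)) (W1 m d $$ (1,1))"
  unfolding sW_eq_aff_rep_W1 sC_aff_rep_sE ..

lemma map_mat_of_int_cwe: "map_mat of_int (cwe a b c d) = cwe (of_int a) (of_int b) (of_int c) (of_int d)"
  unfolding cwe_def mat_of_rows_list_5 map_mat_def dim_row_mat dim_col_mat
  by (rule mat_square_eqI; simp only: less_5_iff; elim disjE; simp)

lemma char_matrix_cwe:
  "x \<cdot>\<^sub>m 1\<^sub>m 5 - cwe a b c d = Matrix.mat 5 5 (\<lambda>(i,j).
    [[x, 0, -b, -a, -2 * b],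
     [0, x, -d, -c, -(2 * d - 2)],
     [-b, -a, x, 0, -(2 * a - 2)],
     [-d, -c, 0, x, -2 * c],
     [-2 * d, -2 * c, -2 * b, -2 * a, x - (4 * b + 4 * c + 1)]] ! i ! j)"
  unfolding cwe_def mat_of_rows_list_5
  by (rule eq_matI; simp only: less_5_iff index_minus_mat index_smult_mat index_one_mat
      index_mat dim_row_mat dim_col_mat minus_carrier_mat; (elim disjE)?; simp)

text \<open>The second summand vanishes when \<open>ad - bc = 1\<close>; keeping it makes this an unconditional
  polynomial identity.\<close>

lemma det_char_matrix_cwe:
  "Determinant.det (x \<cdot>\<^sub>m 1\<^sub>m 5 - cwe a b c d) =
    (x - 1) * (1 - 4 * (b + c) * x - ((b + c)^2 + 4 * (a + d) * (b + c) + 2) * x^2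
               - 4 * (b + c) * x^3 + x^4)
    + (a * d - b * c - 1) * (-1 + x + 2 * x^2 - 2 * x^3 + 4 * c * x - 4 * c * x^2 + 4 * b * x
               - 4 * b * x^2 + b * c - b * c * x - a * d + a * d * x)"
proof -
  have five: "(5::nat) = Suc (Suc (Suc (Suc (Suc 0))))"
    by simp
  show ?thesis
    unfolding char_matrix_cwe unfolding five
    by (simp only: det_mat_Suc det_mat_0 sum.lessThan_Suc lessThan_0 sum.empty case_prod_conv)
      (simp add: algebra_simps power2_eq_square power3_eq_cube power4_eq_xxxx)
qed

lemma char_poly_cwe:
  fixes a b c d :: "'a :: {idom, ring_char_0}"
  assumes "a * d - b * c = 1"
  shows "char_poly (cwe a b c d) =
    [:-1, 1:] * [:1, -4 * (b + c), -((b + c)^2 + 4 * (a + d) * (b + c) + 2), -4 * (b + c), 1:]"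
proof -
  have "cwe a b c d \<in> carrier_mat 5 5"
    by (simp add: cwe_def mat_of_rows_list_5)
  then have "poly (char_poly (cwe a b c d)) x =
      poly ([:-1, 1:] * [:1, -4 * (b + c), -((b + c)^2 + 4 * (a + d) * (b + c) + 2), -4 * (b + c), 1:]) x"
    for x
    using assms by (simp add: poly_char_poly_eq_det det_char_matrix_cwe algebra_simps
        power2_eq_square power3_eq_cube power4_eq_xxxx)
  then show ?thesis
    by (rule poly_ext)
qed

text \<open>The quartic is palindromic, so it splits as \<open>(x\<^sup>2 - (2s + r)x + 1)(x\<^sup>2 - (2s - r)x + 1)\<close>
  with \<open>r\<^sup>2 = 5s\<^sup>2 + 4ts + 4\<close>; the roots of the two quadratics are \<open>s \<pm> r/2 \<pm> q/2\<close>.\<close>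

lemma palindromic_quartic_factorization:
  fixes s t x :: complex
  defines "r \<equiv> csqrt (5 * s^2 + 4 * t * s + 4)"
  defines "q\<^sub>1 \<equiv> csqrt (9 * s^2 + 4 * t * s + 4 * s * r)"
    and "q\<^sub>2 \<equiv> csqrt (9 * s^2 + 4 * t * s - 4 * s * r)"
  shows "1 - 4 * s * x - (s^2 + 4 * t * s + 2) * x^2 - 4 * s * x^3 + x^4 =
    (x - (s + r/2 + q\<^sub>1/2)) * (x - (s + r/2 - q\<^sub>1/2)) * ((x - (s - r/2 + q\<^sub>2/2)) * (x - (s - r/2 - q\<^sub>2/2)))"
proof -
  have r: "r^2 = 5 * s^2 + 4 * t * s + 4"
    unfolding r_def by simp
  have "(x - (s + r/2 + q\<^sub>1/2)) * (x - (s + r/2 - q\<^sub>1/2)) = x^2 - (2 * s + r) * x + ((s + r/2)^2 - q\<^sub>1^2/4)"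
    by (simp add: field_simps power2_eq_square)
  also have "(s + r/2)^2 - q\<^sub>1^2/4 = 1"
    unfolding q\<^sub>1_def power2_csqrt by (simp add: field_simps power2_eq_square r[unfolded power2_eq_square])
  finally have 1: "(x - (s + r/2 + q\<^sub>1/2)) * (x - (s + r/2 - q\<^sub>1/2)) = x^2 - (2 * s + r) * x + 1" .
  have "(x - (s - r/2 + q\<^sub>2/2)) * (x - (s - r/2 - q\<^sub>2/2)) = x^2 - (2 * s - r) * x + ((s - r/2)^2 - q\<^sub>2^2/4)"
    by (simp add: field_simps power2_eq_square)
  also have "(s - r/2)^2 - q\<^sub>2^2/4 = 1"
    unfolding q\<^sub>2_def power2_csqrt by (simp add: field_simps power2_eq_square r[unfolded power2_eq_square])
  finally have 2: "(x - (s - r/2 + q\<^sub>2/2)) * (x - (s - r/2 - q\<^sub>2/2)) = x^2 - (2 * s - r) * x + 1" .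
  have 3: "(x^2 - (2 * s + r) * x + 1) * (x^2 - (2 * s - r) * x + 1) =
      x^4 - 4 * s * x^3 + (2 + 4 * s^2 - r^2) * x^2 - 4 * s * x + 1"
    by (simp add: field_simps power2_eq_square power3_eq_cube power4_eq_xxxx)
  show ?thesis
    unfolding 1 2 3 r by (simp add: algebra_simps power2_eq_square)
qed

lemma eigenvalue_cwe:
  fixes a b c d :: int and x :: complex
  assumes "a * d - b * c = 1"
  shows "eigenvalue (map_mat of_int (cwe a b c d)) x \<longleftrightarrow>
    (let s = complex_of_int (b + c); t = complex_of_int (a + d);
         r = csqrt (5 * s^2 + 4 * t * s + 4) in
     x \<in> {1,
           s + r / 2 + csqrt (9 * s^2 + 4 * t * s + 4 * s * r) / 2,
           s + r / 2 - csqrt (9 * s^2 + 4 * t * s + 4 * s * r) / 2,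
           s - r / 2 + csqrt (9 * s^2 + 4 * t * s - 4 * s * r) / 2,
           s - r / 2 - csqrt (9 * s^2 + 4 * t * s - 4 * s * r) / 2})"
proof -
  define s t where "s = complex_of_int (b + c)" and "t = complex_of_int (a + d)"
  have det: "of_int a * of_int d - of_int b * of_int c = (1 :: complex)"
    using arg_cong[OF assms, of complex_of_int] by simp
  have "eigenvalue (map_mat of_int (cwe a b c d)) x \<longleftrightarrow>
      poly (char_poly (cwe (complex_of_int a) (of_int b) (of_int c) (of_int d))) x = 0"
    unfolding map_mat_of_int_cwe
    by (rule eigenvalue_root_char_poly[of _ 5]) (simp add: cwe_def mat_of_rows_list_5)
  also have "\<dots> \<longleftrightarrow> (x - 1) * (1 - 4 * s * x - (s^2 + 4 * t * s + 2) * x^2 - 4 * s * x^3 + x^4) = 0"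
    unfolding char_poly_cwe[OF det] s_def t_def
    by (simp add: algebra_simps power2_eq_square power3_eq_cube power4_eq_xxxx)
  finally show ?thesis
    unfolding Let_def s_def[symmetric] t_def[symmetric] palindromic_quartic_factorization
    by simp
qed

theorem mainTheorem13:
  shows "inverts_mat sE sE \<and> mat_inv sE = sE \<and> sE * sA * sE = sB \<and> sE * sB * sE = sA \<and> sE * sC * sE = sC \<and>
    (\<forall>(m :: nat \<Rightarrow> int) (d :: nat) t s.
      t = tr2 (W1 m d) \<longrightarrow> s = antitr2 (W1 m d) \<longrightarrow>
      char_poly (sC * sW m d * sE) =
        [:-1, 1:] * [:1, -4 * s, -(s^2 + 4 * t * s + 2), -4 * s, 1:]
      \<and> (\<forall>x :: complex. eigenvalue (map_mat of_int (sC * sW m d * sE)) x \<longleftrightarrow>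
          (let s' = complex_of_int s; t' = complex_of_int t;
               r = csqrt (5 * s'^2 + 4 * t' * s' + 4) in
           x \<in> {1,
                 s' + r / 2 + csqrt (9 * s'^2 + 4 * t' * s' + 4 * s' * r) / 2,
                 s' + r / 2 - csqrt (9 * s'^2 + 4 * t' * s' + 4 * s' * r) / 2,
                 s' - r / 2 + csqrt (9 * s'^2 + 4 * t' * s' - 4 * s' * r) / 2,
                 s' - r / 2 - csqrt (9 * s'^2 + 4 * t' * s' - 4 * s' * r) / 2})))"
proof -
  have sE: "sE \<in> carrier_mat 5 5"
    by (simp add: sE_def mat_of_rows_list_5)
  have "inverts_mat sE sE" and "mat_inv sE = sE"
    using sE sE_sE by (simp_all add: inverts_mat_def mat_inv_eqI)
  then show ?thesis
    unfolding sC_sW_sE_eq_cwe tr2_def antitr2_def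
    using sE_sA_sE sE_sB_sE sE_sC_sE
      char_poly_cwe[OF sl2_entries_det[OF W1_sl2]] eigenvalue_cwe[OF sl2_entries_det[OF W1_sl2]]
    by simp
qed

end
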